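(* Let $\lambda,\mu,\rho,\mathsf D>0$, $k\ge2$ an integer, $X=\mathbb R$, let $\hat f=\hat f_k$, i.e. $\hat f(x,y)=\sum_{j=0}^k\frac1{j!}\partial_y^jf(x,\hat y)(y-\hat y)^j$, and let $\mu_{\mathsf{cr}}=\sqrt{\frac{\lambda\rho\mathsf D^{k-1}}{k!}}$. 1. If $\mu\le\mu_{\mathsf{cr}}$, then for $Y=[0,\mathsf D]$ there exist $\bar\mu\le\mu$, $\hat y\in Y$ and $x^*\in\mathbb R$ such that, for $f=F_{k,-1,\lambda,\bar\mu,\rho}$, $\hat\varphi_{2\lambda}'(x^* )=0$ while $|\varphi_{2\lambda}'(x^* )|\ge\frac{\mu\mathsf D}{2k}$. 2. If $\mu\ge\mu_{\mathsf{cr}}$, then for $Y=[-\frac12\mathsf D,\frac12\mathsf D]$ there exist $\bar\mu\le\mu$, $\hat y\in Y$ and $x^*\in\mathbb R$ such that, for $f=F_{k,1,\lambda,\bar\mu,\rho}$, $\hat\varphi_{2\lambda}'(x^* )=0$ while $|\varphi_{2\lambda}'(x^* )|\ge\frac{\mu_{\mathsf{cr}}\mathsf D}{2k}$.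
   Context: For $k\in\mathbb N\cup\{0\}$, $s\in\{\pm1,0\}$, $\lambda>0$, $\mu\ge0$, $\rho\ge0$: $F_{k,s,\lambda,\mu,\rho}(x,y)=-\frac{\lambda x^2}{2}+\mu xy+\frac{s\rho|y|^{k+1}}{(k+1)!}$ on $\mathbb R\times\mathbb R$. Given $f$, $X,Y\subseteq\mathbb R$ and $\hat y\in Y$: $\varphi(x)=\max_{y\in Y}f(x,y)$, $\hat\varphi(x)=\max_{y\in Y}\hat f(x,y)$, and for a function $\phi$ on $X$, $\phi_{2\lambda}(x)=\min_{u\in X}\{\phi(u)+\lambda(u-x)^2\}$ (Moreau envelope with parameter $2\lambda$); $'$ denotes the derivative in $x$. *)

theory Defs
  imports "HOL-Analysis.Analysis"
begin

definition F :: "nat \<Rightarrow> real \<Rightarrow> real \<Rightarrow> real \<Rightarrow> real \<Rightarrow> real \<Rightarrow> real \<Rightarrow> real" where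
  "F k s lam mu rho x y = - lam * x^2 / 2 + mu * x * y + s * rho * \<bar>y\<bar>^(k+1) / fact (k+1)"

definition taylor_y :: "nat \<Rightarrow> (real \<Rightarrow> real \<Rightarrow> real) \<Rightarrow> real \<Rightarrow> real \<Rightarrow> real \<Rightarrow> real" where
  "taylor_y k f yh x y = (\<Sum>j\<le>k. ((deriv ^^ j) (\<lambda>t. f x t) yh) / fact j * (y - yh)^j)"

definition maxY :: "real set \<Rightarrow> (real \<Rightarrow> real \<Rightarrow> real) \<Rightarrow> real \<Rightarrow> real" where
  "maxY Y f x = Sup ((\<lambda>y. f x y) ` Y)"

text \<open>Moreau envelope with parameter 2 lambda over X = R:
  phi_{2 lambda}(x) = min_u { phi(u) + lambda (u-x)^2 }\<close>
definition moreau :: "real \<Rightarrow> (real \<Rightarrow> real) \<Rightarrow> real \<Rightarrow> real" where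
  "moreau lam phi x = Inf ((\<lambda>u. phi u + lam * (u - x)^2) ` UNIV)"

end

(*
  Write f(x,y) = -lam x^2/2 + mu x y + g(y) and phi(x) = max_y f(x,y). Then phi(u) + lam u^2/2 is a
  maximum of affine functions of u. If its inner maximisers at u0 include points on both sides of z
  and mu z = lam (2 x0 - u0), then mu z is a subgradient at u0, and the Moreau envelope of phi is
  squeezed between two parabolas touching at x0 with slope 2 lam (x0 - u0); so it is differentiable
  at x0 with that derivative. Both F and its Taylor model in y have this shape: for yh >= 0 the model
  replaces s rho |y|^(k+1)/(k+1)! by s rho (y^(k+1) - (y - yh)^(k+1))/(k+1)!.

  Concave case (s = -1, Y = [0,D]). Take the coupling mu/2 and yh = 0. The model is bilinear and its
  envelope is stationary at x0 = mu D/(2 lam). For F the inner maximiser y0 at the proximal point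
  solves a polynomial equation, and mu <= mu_cr together with Bernoulli's inequality forces
  y0 <= D - D/(2k); the envelope's derivative at x0 is mu (y0 - D).

  Convex case (s = 1, Y = [-D/2,D/2], coupling at most mu_cr). For F the inner maximiser is an end
  point, and the envelope has derivative 2 lam x while |2 lam x| <= mu D/2, and -(2 lam x + mu D)
  further left. The coupling and x0 are tuned so that the model's envelope is stationary at x0 while
  the true derivative there is at least mu_cr D/(2k): for even k both end points maximise the
  model's inner problem (yh = D/2); for odd k an interior local maximum at -theta D beats the right
  end point (yh = eta D), with (theta, eta) chosen separately for k = 3, k in {5,7} and k >= 9.
*)
theory Submission
  imports Defs
begin

section \<open>Moreau envelopes of marginal maxima\<close>

lemma has_real_derivative_quadratic_error:
  fixes f :: "real \<Rightarrow> real"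
  assumes "\<forall>\<^sub>F x in at x0. \<bar>f x - f x0 - d * (x - x0)\<bar> \<le> C * (x - x0)^2"
  shows "(f has_real_derivative d) (at x0)"
proof -
  have "((\<lambda>x. (f x - f x0) / (x - x0) - d) \<longlongrightarrow> 0) (at x0)"
  proof (rule Lim_null_comparison)
    have "\<forall>\<^sub>F x in at x0. x \<noteq> x0"
      by (simp add: eventually_at_filter)
    with assms show "\<forall>\<^sub>F x in at x0. norm ((f x - f x0) / (x - x0) - d) \<le> C * \<bar>x - x0\<bar>"
    proof eventually_elim
      case (elim x)
      then have "norm ((f x - f x0) / (x - x0) - d) = \<bar>f x - f x0 - d * (x - x0)\<bar> / \<bar>x - x0\<bar>"
        by (simp add: field_simps)
      also have "\<dots> \<le> C * (x - x0)^2 / \<bar>x - x0\<bar>"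
        using elim by (intro divide_right_mono) auto
      also have "\<dots> = C * \<bar>x - x0\<bar>"
        using elim by (subst power2_abs[symmetric]) (simp add: power2_eq_square del: abs_mult_self_eq)
      finally show ?case .
    qed
    have "((\<lambda>x. C * \<bar>x - x0\<bar>) \<longlongrightarrow> C * \<bar>x0 - x0\<bar>) (at x0)"
      by (intro tendsto_intros)
    then show "((\<lambda>x. C * \<bar>x - x0\<bar>) \<longlongrightarrow> 0) (at x0)"
      by simp
  qed
  then show ?thesis
    by (simp add: has_field_derivative_iff LIM_zero_iff)
qed

lemma moreau_has_real_derivative_at_prox:
  fixes phi :: "real \<Rightarrow> real"
  assumes lam: "lam > 0"
    and subgrad: "\<And>u. phi u0 + lam*u0^2/2 + lam*(2*x0 - u0)*(u - u0) \<le> phi u + lam*u^2/2"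
  shows "(moreau lam phi has_real_derivative 2*lam*(x0 - u0)) (at x0)"
proof -
  define b where "b = lam*(2*x0 - u0)"
  define lower where "lower x = phi u0 + lam*u0^2/2 - b*u0 + lam*x^2 - (b - 2*lam*x)^2/(2*lam)" for x
  define upper where "upper x = phi u0 + lam*(u0 - x)^2" for x
  have lower_le: "lower x \<le> phi u + lam*(u - x)^2" for u x
  proof -
    have "phi u0 + lam*u0^2/2 + b*(u - u0) - lam*u^2/2 + lam*(u - x)^2 - lower x
        = (lam*u + b - 2*lam*x)^2/(2*lam)"
      unfolding lower_def using lam by (simp add: field_simps power2_eq_square)
    moreover have "(lam*u + b - 2*lam*x)^2/(2*lam) \<ge> 0"
      using lam by simp
    ultimately show ?thesis
      using subgrad[of u] unfolding b_def by linarith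
  qed
  have bdd: "bdd_below (range (\<lambda>u. phi u + lam*(u - x)^2))" for x
    using lower_le by (intro bdd_belowI[where m = "lower x"]) auto
  have le_upper: "moreau lam phi x \<le> upper x" for x
    unfolding moreau_def upper_def by (rule cInf_lower[OF _ bdd]) auto
  have ge_lower: "lower x \<le> moreau lam phi x" for x
    unfolding moreau_def by (rule cINF_greatest) (use lower_le in auto)
  have "lower x0 = upper x0"
    unfolding lower_def upper_def b_def using lam by (simp add: field_simps power2_eq_square)
  then have at_x0: "moreau lam phi x0 = upper x0"
    using le_upper[of x0] ge_lower[of x0] by linarith
  have "\<bar>moreau lam phi x - moreau lam phi x0 - 2*lam*(x0 - u0)*(x - x0)\<bar> \<le> lam*(x - x0)^2" for x
  proof -
    have "upper x - upper x0 - 2*lam*(x0 - u0)*(x - x0) = lam*(x - x0)^2"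
      unfolding upper_def by (simp add: field_simps power2_eq_square)
    moreover have "lower x - upper x0 - 2*lam*(x0 - u0)*(x - x0) = - lam*(x - x0)^2"
      unfolding lower_def upper_def b_def using lam by (simp add: field_simps power2_eq_square)
    ultimately show ?thesis
      using le_upper[of x] ge_lower[of x] at_x0 by (simp only: abs_le_iff) linarith
  qed
  then show ?thesis
    by (intro has_real_derivative_quadratic_error always_eventually) auto
qed

lemma maxY_ge:
  fixes f :: "real \<Rightarrow> real \<Rightarrow> real"
  assumes "y \<in> Y" "compact Y" "continuous_on Y (f x)"
  shows "f x y \<le> maxY Y f x"
  unfolding maxY_def
proof (rule cSup_upper)
  show "f x y \<in> f x ` Y"
    using assms by auto
  have "compact (f x ` Y)"
    using assms by (intro compact_continuous_image) auto
  then show "bdd_above (f x ` Y)"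
    by (intro bounded_imp_bdd_above compact_imp_bounded)
qed

lemma maxY_le:
  fixes f :: "real \<Rightarrow> real \<Rightarrow> real"
  assumes "Y \<noteq> {}" "\<And>y. y \<in> Y \<Longrightarrow> f x y \<le> V"
  shows "maxY Y f x \<le> V"
  unfolding maxY_def using assms by (intro cSup_least) auto

lemma moreau_maxY_has_real_derivative:
  fixes g :: "real \<Rightarrow> real"
  assumes lam: "lam > 0" and Y: "compact Y" "continuous_on Y g"
    and maximizers: "ya \<in> Y" "yb \<in> Y" "ya \<le> z" "z \<le> yb"
    and max: "\<And>y. y \<in> Y \<Longrightarrow> mu*u0*y + g y \<le> mu*u0*ya + g ya"
    and tie: "mu*u0*yb + g yb = mu*u0*ya + g ya"
    and prox: "mu*z = lam*(2*x0 - u0)"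
  shows "(moreau lam (maxY Y (\<lambda>x y. -lam*x^2/2 + mu*x*y + g y)) has_real_derivative 2*lam*(x0 - u0)) (at x0)"
proof (rule moreau_has_real_derivative_at_prox[OF lam])
  define f where "f = (\<lambda>x y. -lam*x^2/2 + mu*x*y + g y)"
  have cont: "continuous_on Y (f x)" for x
    unfolding f_def using Y by (intro continuous_intros)
  fix u
  have f_u: "f u y = -lam*u^2/2 + (mu*u0*y + g y) + mu*(u - u0)*y" for y
    unfolding f_def by (simp add: algebra_simps)
  have "maxY Y f u0 \<le> -lam*u0^2/2 + (mu*u0*ya + g ya)"
    using maximizers max by (intro maxY_le) (auto simp: f_def)
  moreover have "mu*u0*ya + g ya + mu*(u - u0)*z \<le> maxY Y f u + lam*u^2/2"
  proof (cases "mu*(u - u0) \<ge> 0")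
    case True
    then have "mu*(u - u0)*z \<le> mu*(u - u0)*yb"
      using maximizers by (intro mult_left_mono) auto
    moreover have "f u yb \<le> maxY Y f u"
      using maximizers by (intro maxY_ge Y cont)
    ultimately show ?thesis
      using tie f_u[of yb] by linarith
  next
    case False
    then have "mu*(u - u0)*z \<le> mu*(u - u0)*ya"
      using maximizers by (intro mult_left_mono_neg) auto
    moreover have "f u ya \<le> maxY Y f u"
      using maximizers by (intro maxY_ge Y cont)
    ultimately show ?thesis
      using f_u[of ya] by linarith
  qed
  moreover have "lam*(2*x0 - u0)*(u - u0) = mu*(u - u0)*z"
    unfolding prox[symmetric] by simp
  ultimately show "maxY Y f u0 + lam*u0^2/2 + lam*(2*x0 - u0)*(u - u0) \<le> maxY Y f u + lam*u^2/2"
    by linarith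
qed

section \<open>Taylor models of F\<close>

lemma has_real_derivative_sgn_power_abs:
  fixes t :: real
  assumes n: "n \<ge> 2"
  shows "((\<lambda>s. sgn s ^ j * \<bar>s\<bar>^n) has_real_derivative real n * sgn t ^ Suc j * \<bar>t\<bar>^(n - 1)) (at t)"
proof (cases t "0::real" rule: linorder_cases)
  case less
  have "((\<lambda>s. (-1)^j * (-s)^n) has_real_derivative (-1)^j * (real n * (-t)^(n - 1) * -1)) (at t)"
    by (auto intro!: derivative_eq_intros)
  then have "((\<lambda>s. sgn s ^ j * \<bar>s\<bar>^n) has_real_derivative (-1)^j * (real n * (-t)^(n - 1) * -1)) (at t)"
    by (rule has_field_derivative_transform_within_open[where S = "{..<0}"]) (use less in auto)
  then show ?thesis
    using less by (simp add: algebra_simps)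
next
  case equal
  have "\<forall>\<^sub>F s in at (0::real). s \<in> ball 0 1"
    using eventually_at_ball'[of 1 "0::real" UNIV] by (rule eventually_mono) auto
  then have "\<forall>\<^sub>F s in at (0::real). \<bar>sgn s ^ j * \<bar>s\<bar>^n\<bar> \<le> s^2"
  proof eventually_elim
    case (elim s)
    have "\<bar>sgn s ^ j * \<bar>s\<bar>^n\<bar> = \<bar>sgn s\<bar>^j * \<bar>s\<bar>^n"
      by (simp add: abs_mult power_abs)
    also have "\<dots> \<le> \<bar>s\<bar>^n"
      by (rule mult_left_le_one_le) (auto simp: power_le_one abs_sgn_eq)
    also have "\<dots> \<le> \<bar>s\<bar>^2"
      using elim n by (intro power_decreasing) auto
    finally show ?case
      by simp
  qed
  then have "((\<lambda>s. sgn s ^ j * \<bar>s\<bar>^n) has_real_derivative 0) (at 0)"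
    using n by (intro has_real_derivative_quadratic_error[where C = 1]) (simp add: power_0_left)
  then show ?thesis
    using equal n by simp
next
  case greater
  have "((\<lambda>s. s^n) has_real_derivative real n * t^(n - 1)) (at t)"
    using DERIV_pow[of n t] by simp
  then have "((\<lambda>s. sgn s ^ j * \<bar>s\<bar>^n) has_real_derivative real n * t^(n - 1)) (at t)"
    by (rule has_field_derivative_transform_within_open[where S = "{0<..}"]) (use greater in auto)
  then show ?thesis
    using greater by simp
qed

lemma higher_deriv_affine_abs_power:
  fixes A B K :: real
  assumes "j \<le> k"
  shows "(deriv ^^ j) (\<lambda>t. A + B*t + K*\<bar>t\<bar>^(k+1)) =
    (\<lambda>t. (if j = 0 then A + B*t else if j = 1 then B else 0)
          + K * (fact (k+1) / fact (k+1-j)) * (sgn t ^ j * \<bar>t\<bar>^(k+1-j)))"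
  using assms
proof (induction j)
  case 0
  then show ?case
    by simp
next
  case (Suc j)
  then have j: "j < k"
    by simp
  obtain m where m: "k + 1 - j = Suc m" "k + 1 - Suc j = m" and "m \<ge> 1"
    using j by (intro that[of "k - j"]) auto
  have poly: "((\<lambda>t. if j = 0 then A + B*t else if j = 1 then B else 0)
      has_real_derivative (if Suc j = 0 then A + B*t else if Suc j = 1 then B else 0)) (at t)" for t
    by (cases "j = 0") (auto intro!: derivative_eq_intros)
  have "((deriv ^^ j) (\<lambda>t. A + B*t + K*\<bar>t\<bar>^(k+1)) has_real_derivative
      (if Suc j = 0 then A + B*t else if Suc j = 1 then B else 0)
      + K * (fact (k+1) / fact (k+1 - Suc j)) * (sgn t ^ Suc j * \<bar>t\<bar>^(k+1 - Suc j))) (at t)" for t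
    unfolding Suc.IH[OF Suc_leD[OF Suc.prems]] m
    by (rule DERIV_cong[OF DERIV_add[OF poly DERIV_cmult[OF has_real_derivative_sgn_power_abs]]])
      (use \<open>m \<ge> 1\<close> in \<open>simp_all del: of_nat_Suc\<close>)
  then show ?case
    by (intro ext) (simp only: funpow.simps comp_def DERIV_imp_deriv)
qed

lemma taylor_y_F_eq:
  fixes yh :: real
  assumes yh: "yh \<ge> 0" and k: "k \<ge> 1"
  shows "taylor_y k (F k s lam mu rho) yh =
    (\<lambda>x y. -lam*x^2/2 + mu*x*y + s*rho/fact (k+1) * (y^(k+1) - (y - yh)^(k+1)))"
proof (intro ext)
  fix x y :: real
  define A B K where "A = -lam*x^2/2" and "B = mu*x" and "K = s*rho/fact (k+1)"
  have F_x: "(\<lambda>t. F k s lam mu rho x t) = (\<lambda>t. A + B*t + K*\<bar>t\<bar>^(k+1))"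
    unfolding F_def A_def B_def K_def by (simp add: field_simps)
  have taylor_term: "(deriv ^^ j) (\<lambda>t. F k s lam mu rho x t) yh / fact j * (y - yh)^j =
      ((if j = 0 then A + B*yh else 0) + (if j = 1 then B*(y - yh) else 0))
      + K * (of_nat ((k+1) choose j) * (y - yh)^j * yh^(k+1-j))" if "j \<in> {..k}" for j
  proof -
    have j: "j \<le> k"
      using that by simp
    then have sgn_abs: "sgn yh ^ j * \<bar>yh\<bar>^(k+1-j) = yh^(k+1-j)"
      using yh by (cases "yh = 0") (auto simp: power_0_left)
    have binom: "of_nat ((k+1) choose j) = (fact (k+1) / (fact j * fact (k+1-j)) :: real)"
      using j by (simp add: binomial_fact)
    show ?thesis
      unfolding F_x higher_deriv_affine_abs_power[OF j] sgn_abs binom by (simp add: field_simps)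
  qed
  have affine_part: "(\<Sum>j\<le>k. if j = 0 then A + B*yh else 0) + (\<Sum>j\<le>k. if j = 1 then B*(y - yh) else 0) = A + B*y"
    using k by (simp add: algebra_simps)
  have binomial_part: "(\<Sum>j\<le>k. of_nat ((k+1) choose j) * (y - yh)^j * yh^(k+1-j)) = y^(k+1) - (y - yh)^(k+1)"
    using binomial_ring[of "y - yh" yh "k+1"] by simp
  have "taylor_y k (F k s lam mu rho) yh x y =
      (\<Sum>j\<le>k. ((if j = 0 then A + B*yh else 0) + (if j = 1 then B*(y - yh) else 0))
        + K * (of_nat ((k+1) choose j) * (y - yh)^j * yh^(k+1-j)))"
    unfolding taylor_y_def by (rule sum.cong[OF refl taylor_term])
  also have "\<dots> = A + B*y + K * (y^(k+1) - (y - yh)^(k+1))"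
    by (simp only: sum.distrib sum_distrib_left[symmetric] affine_part binomial_part)
  finally show "taylor_y k (F k s lam mu rho) yh x y =
      -lam*x^2/2 + mu*x*y + s*rho/fact (k+1) * (y^(k+1) - (y - yh)^(k+1))"
    by (simp add: A_def B_def K_def)
qed

lemma divide_fact_Suc_mult:
  fixes x :: real
  shows "x / fact (k+1) * real (k+1) = x / fact k"
  by (simp del: of_nat_Suc)

section \<open>Spurious stationary points\<close>

definition critical_mu :: "real \<Rightarrow> real \<Rightarrow> real \<Rightarrow> nat \<Rightarrow> real" where
  "critical_mu lam rho D k = sqrt (lam * rho * D^(k-1) / fact k)"

lemma critical_mu_squared:
  assumes "lam \<ge> 0" "rho \<ge> 0" "D \<ge> 0"
  shows "(critical_mu lam rho D k)^2 = lam * rho * D^(k-1) / fact k"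
  using assms unfolding critical_mu_def by simp

definition spurious_stationary_point ::
    "real set \<Rightarrow> nat \<Rightarrow> real \<Rightarrow> real \<Rightarrow> real \<Rightarrow> real \<Rightarrow> real \<Rightarrow> bool" where
  "spurious_stationary_point Y k s lam mu rho bound \<longleftrightarrow>
    (\<exists>mub yh xs. 0 \<le> mub \<and> mub \<le> mu \<and> yh \<in> Y \<and>
       (moreau lam (maxY Y (taylor_y k (F k s lam mub rho) yh)) has_real_derivative 0) (at xs) \<and>
       (\<exists>d. (moreau lam (maxY Y (F k s lam mub rho)) has_real_derivative d) (at xs) \<and> \<bar>d\<bar> \<ge> bound))"

lemma spurious_stationary_pointI:
  assumes "0 \<le> mub" "mub \<le> mu" "yh \<in> Y"
    and "(moreau lam (maxY Y (taylor_y k (F k s lam mub rho) yh)) has_real_derivative 0) (at xs)"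
    and "(moreau lam (maxY Y (F k s lam mub rho)) has_real_derivative d) (at xs)"
    and "bound \<le> \<bar>d\<bar>"
  shows "spurious_stationary_point Y k s lam mu rho bound"
  using assms unfolding spurious_stationary_point_def by blast

lemma spurious_stationary_point_mono:
  assumes "spurious_stationary_point Y k s lam mu rho bound" "mu \<le> mu'"
  shows "spurious_stationary_point Y k s lam mu' rho bound"
  using assms unfolding spurious_stationary_point_def by (meson order_trans)

section \<open>The concave case\<close>

lemma DERIV_sign_change_imp_le:
  fixes h h' :: "real \<Rightarrow> real"
  assumes deriv: "\<And>t. (h has_real_derivative h' t) (at t)"
    and up: "\<And>t. a \<le> t \<Longrightarrow> t \<le> z \<Longrightarrow> 0 \<le> h' t"
    and down: "\<And>t. z \<le> t \<Longrightarrow> t \<le> b \<Longrightarrow> h' t \<le> 0"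
    and y: "a \<le> y" "y \<le> b"
  shows "h y \<le> h z"
proof (cases "y \<le> z")
  case True
  show ?thesis
    by (rule deriv_nonneg_imp_mono[OF deriv _ True]) (use up y in auto)
next
  case False
  show ?thesis
    by (rule deriv_nonpos_imp_antimono[OF deriv]) (use down y False in auto)
qed

lemma linear_minus_power_le_at_critical:
  fixes c m y y0 :: real
  assumes "c \<ge> 0" "y \<ge> 0" "y0 \<ge> 0" and crit: "c * real (k+1) * y0^k = m"
  shows "m*y - c*y^(k+1) \<le> m*y0 - c*y0^(k+1)"
proof (rule DERIV_sign_change_imp_le[where h = "\<lambda>y. m*y - c*y^(k+1)" and a = 0 and b = "max y y0"])
  show "((\<lambda>y. m*y - c*y^(k+1)) has_real_derivative m - c * real (k+1) * t^k) (at t)" for t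
  proof -
    have pow: "((\<lambda>y. y^(k+1)) has_real_derivative real (k+1) * t^k) (at t)"
      using DERIV_pow[of "k+1" t] by simp
    show ?thesis
      by (rule DERIV_cong[OF DERIV_diff[OF DERIV_cmult[OF DERIV_ident] DERIV_cmult[OF pow]]]) simp
  qed
  show "0 \<le> m - c * real (k+1) * t^k" if "0 \<le> t" "t \<le> y0" for t
    using that assms by (auto intro!: mult_left_mono power_mono simp flip: crit)
  show "m - c * real (k+1) * t^k \<le> 0" if "y0 \<le> t" for t
    using that assms by (auto intro!: mult_left_mono power_mono simp flip: crit)
qed (use assms in auto)

lemma power_eq_affine_root:
  fixes a b D :: real
  assumes a: "a > 0" and b: "b > 0" and D: "D > 0" and k: "k \<ge> 1"
    and small: "4*b \<le> a*D^(k-1)"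
  shows "\<exists>y. 0 < y \<and> y \<le> D - D/(2*real k) \<and> a*y^k = b*(2*D - y)"
proof -
  define y1 where "y1 = D*(1 - 1/(2*real k))"
  have y1_pos: "0 \<le> y1"
    unfolding y1_def using D k by (simp add: field_simps)
  have "1/2 \<le> (1 - 1/(2*real k))^k"
    using Bernoulli_inequality[of "-1/(2*real k)" k] k by (simp add: field_simps)
  then have "D^k/2 \<le> y1^k"
    unfolding y1_def power_mult_distrib using D by (simp add: field_simps)
  moreover have "b*(2*D - y1) \<le> a*D^k/2"
  proof -
    have "b*(2*D - y1) \<le> (4*b)*D/2"
      using b y1_pos by (simp add: algebra_simps)
    also have "\<dots> \<le> a*D^(k-1)*D/2"
      using small D by (intro divide_right_mono mult_right_mono) auto
    also have "\<dots> = a*D^k/2"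
      using k by (simp add: power_eq_if)
    finally show ?thesis .
  qed
  moreover have "a*(D^k/2) \<le> a*y1^k" if "D^k/2 \<le> y1^k"
    using that a by (intro mult_left_mono) auto
  ultimately have "b*(2*D - y1) \<le> a*y1^k"
    by simp
  moreover have "a*0^k - b*(2*D - 0) < 0"
    using k b D by (simp add: power_0_left)
  moreover have "continuous_on {0..y1} (\<lambda>y. a*y^k - b*(2*D - y))"
    by (intro continuous_intros)
  ultimately obtain y where y: "0 \<le> y" "y \<le> y1" "a*y^k - b*(2*D - y) = 0"
    using IVT'[of "\<lambda>y. a*y^k - b*(2*D - y)" 0 0 y1] y1_pos by auto
  moreover have "y \<noteq> 0"
    using y k b D by (auto simp: power_0_left)
  ultimately show ?thesis
    unfolding y1_def by (intro exI[of _ y]) (auto simp: field_simps)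
qed

lemma moreau_taylor_F_at_zero_has_real_derivative:
  fixes lam mub D :: real
  assumes lam: "lam > 0" and mub: "0 \<le> mub" and D: "0 \<le> D" and k: "k \<ge> 1"
  shows "(moreau lam (maxY {0..D} (taylor_y k (F k s lam mub rho) 0)) has_real_derivative 0)
           (at (mub*D/lam))"
proof -
  define x0 where "x0 = mub*D/lam"
  have "(moreau lam (maxY {0..D} (\<lambda>x y. -lam*x^2/2 + mub*x*y + 0))
      has_real_derivative 2*lam*(x0 - x0)) (at x0)"
  proof (rule moreau_maxY_has_real_derivative[where g = "\<lambda>_. 0" and ya = D and yb = D and z = D])
    have "0 \<le> mub*x0"
      unfolding x0_def using lam mub D by simp
    then show "mub*x0*y + 0 \<le> mub*x0*D + 0" if "y \<in> {0..D}" for y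
      using that by (simp add: mult_left_mono)
  qed (use lam D in \<open>auto simp: x0_def\<close>)
  moreover have "taylor_y k (F k s lam mub rho) 0 = (\<lambda>x y. -lam*x^2/2 + mub*x*y + 0)"
    using taylor_y_F_eq[of 0 k s lam mub rho] k by simp
  ultimately show ?thesis
    unfolding x0_def by simp
qed

lemma moreau_F_concave_has_real_derivative:
  fixes lam mub rho D y0 u0 x0 :: real
  assumes lam: "lam > 0" and rho: "rho \<ge> 0" and y0: "0 \<le> y0" "y0 \<le> D"
    and critical: "rho / fact k * y0^k = mub*u0"
    and prox: "mub*y0 = lam*(2*x0 - u0)"
  shows "(moreau lam (maxY {0..D} (F k (-1) lam mub rho)) has_real_derivative 2*lam*(x0 - u0)) (at x0)"
proof -
  define c where "c = rho / fact (k+1)"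
  have c: "0 \<le> c" "c * real (k+1) * y0^k = mub*u0"
    unfolding c_def divide_fact_Suc_mult using rho critical by simp_all
  have "(moreau lam (maxY {0..D} (\<lambda>x y. -lam*x^2/2 + mub*x*y + - c*\<bar>y\<bar>^(k+1)))
      has_real_derivative 2*lam*(x0 - u0)) (at x0)"
  proof (rule moreau_maxY_has_real_derivative[where ya = y0 and yb = y0 and z = y0])
    show "mub*u0*y + - c*\<bar>y\<bar>^(k+1) \<le> mub*u0*y0 + - c*\<bar>y0\<bar>^(k+1)" if "y \<in> {0..D}" for y
      using linear_minus_power_le_at_critical[OF c(1) _ _ c(2), of y] that y0 by simp
    show "continuous_on {0..D} (\<lambda>y. - c*\<bar>y\<bar>^(k+1))"
      by (intro continuous_intros)
  qed (use lam y0 prox in auto)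
  moreover have "F k (-1) lam mub rho = (\<lambda>x y. -lam*x^2/2 + mub*x*y + - c*\<bar>y\<bar>^(k+1))"
    unfolding F_def c_def by (simp add: fun_eq_iff)
  ultimately show ?thesis
    by simp
qed

lemma spurious_stationary_point_concave:
  fixes lam mu rho D :: real
  assumes lam: "lam > 0" and mu: "mu > 0" and rho: "rho > 0" and D: "D > 0" and k: "k \<ge> 1"
    and mu_le: "mu \<le> critical_mu lam rho D k"
  shows "spurious_stationary_point {0..D} k (-1) lam mu rho (mu * D / (2 * real k))"
proof -
  define mub where "mub = mu/2"
  have "mu^2 \<le> lam * rho * D^(k-1) / fact k"
    using power_mono[OF mu_le, of 2] mu critical_mu_squared[of lam rho D k] lam rho D by simp
  then have "4*mub^2 \<le> (lam * (rho / fact k)) * D^(k-1)"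
    unfolding mub_def by (simp add: power_divide)
  then obtain y0 where y0: "0 < y0" "y0 \<le> D - D/(2*real k)"
    and root: "(lam * (rho / fact k)) * y0^k = mub^2*(2*D - y0)"
    using power_eq_affine_root[of "lam * (rho / fact k)" "mub^2" D k] lam rho mu D k
    unfolding mub_def by auto
  have "0 \<le> D/(2*real k)"
    using D by simp
  with y0 have "y0 \<le> D"
    by linarith
  define x0 u0 where "x0 = mub*D/lam" and "u0 = mub*(2*D - y0)/lam"
  have "rho / fact k * y0^k = mub*u0"
    using root lam unfolding u0_def by (simp add: field_simps power2_eq_square)
  moreover have "mub*y0 = lam*(2*x0 - u0)"
    unfolding x0_def u0_def using lam by (simp add: field_simps)
  ultimately have true: "(moreau lam (maxY {0..D} (F k (-1) lam mub rho))
      has_real_derivative 2*lam*(x0 - u0)) (at x0)"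
    using lam rho y0 \<open>y0 \<le> D\<close> by (intro moreau_F_concave_has_real_derivative) auto
  have model: "(moreau lam (maxY {0..D} (taylor_y k (F k (-1) lam mub rho) 0)) has_real_derivative 0)
      (at x0)"
    unfolding x0_def using lam mu D k by (intro moreau_taylor_F_at_zero_has_real_derivative) (auto simp: mub_def)
  have "2*lam*(x0 - u0) = - mu*(D - y0)"
    unfolding x0_def u0_def mub_def using lam by (simp add: field_simps)
  moreover have "mu * D / (2 * real k) \<le> mu*(D - y0)"
    using y0 mu mult_left_mono[of "D/(2*real k)" "D - y0" mu] by simp
  ultimately show ?thesis
    using mu D by (intro spurious_stationary_pointI[OF _ _ _ model true]) (auto simp: mub_def)
qed

section \<open>The convex case\<close>

lemma DERIV_mono_imp_le_max:
  fixes h h' :: "real \<Rightarrow> real"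
  assumes deriv: "\<And>t. (h has_real_derivative h' t) (at t)"
    and mono: "\<And>s t. a \<le> s \<Longrightarrow> s \<le> t \<Longrightarrow> t \<le> b \<Longrightarrow> h' s \<le> h' t"
    and y: "a \<le> y" "y \<le> b"
  shows "h y \<le> max (h a) (h b)"
proof (cases "h' y \<le> 0")
  case True
  have "h y \<le> h a"
  proof (rule deriv_nonpos_imp_antimono[OF deriv])
    show "h' t \<le> 0" if "t \<in> {a..y}" for t
      using that mono[of t y] y True by auto
  qed (use y in auto)
  then show ?thesis
    by simp
next
  case False
  have "h y \<le> h b"
  proof (rule deriv_nonneg_imp_mono[OF deriv])
    show "0 \<le> h' t" if "t \<in> {y..b}" for t
      using that mono[of y t] y False by auto
  qed (use y in auto)
  then show ?thesis
    by simp
qed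

lemma has_real_derivative_power_shift_diff:
  fixes h :: real
  shows "((\<lambda>x. x^k - (x - h)^k) has_real_derivative real k * x^(k-1) - real k * (x - h)^(k-1)) (at x)"
  by (auto intro!: derivative_eq_intros)

lemma power_shift_diff_mono_even:
  fixes h s t :: real
  assumes "even k" "0 \<le> h" "s \<le> t"
  shows "s^k - (s - h)^k \<le> t^k - (t - h)^k"
proof (rule deriv_nonneg_imp_mono[OF has_real_derivative_power_shift_diff _ assms(3)])
  fix x
  have "odd (k - 1) \<or> k = 0"
    using assms(1) by (cases k) auto
  then have "(x - h)^(k-1) \<le> x^(k-1)"
    using assms(2) by (auto intro: power_mono_odd)
  then show "0 \<le> real k * x^(k-1) - real k * (x - h)^(k-1)"
    by (simp add: right_diff_distrib[symmetric])
qed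

lemma power_shift_diff_antimono_odd:
  fixes h s t :: real
  assumes "odd k" "0 \<le> h" "s \<le> t" "t \<le> h/2"
  shows "t^k - (t - h)^k \<le> s^k - (s - h)^k"
proof (rule deriv_nonpos_imp_antimono[OF has_real_derivative_power_shift_diff _ assms(3)])
  fix x
  assume "x \<in> {s..t}"
  then have "\<bar>x\<bar>^(k-1) \<le> \<bar>x - h\<bar>^(k-1)"
    using assms by (intro power_mono) auto
  then have "x^(k-1) \<le> (x - h)^(k-1)"
    using assms(1) by (simp add: power_even_abs)
  then show "real k * x^(k-1) - real k * (x - h)^(k-1) \<le> 0"
    by (simp add: right_diff_distrib[symmetric] mult_nonneg_nonpos)
qed

lemma power_shift_diff_reflect_odd:
  fixes h t :: real
  assumes "odd k"
  shows "(h - t)^k - (h - t - h)^k = t^k - (t - h)^k"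
proof -
  have "(t - h)^k = -((h - t)^k)" "(h - t - h)^k = -(t^k)"
    using assms power_minus_odd[of k "h - t"] power_minus_odd[of k t] by simp_all
  then show ?thesis
    by simp
qed

lemma power_shift_diff_mono_odd:
  fixes h s t :: real
  assumes "odd k" "0 \<le> h" "h/2 \<le> s" "s \<le> t"
  shows "s^k - (s - h)^k \<le> t^k - (t - h)^k"
  using power_shift_diff_antimono_odd[of k h "h - t" "h - s"] assms
    power_shift_diff_reflect_odd[of k h s] power_shift_diff_reflect_odd[of k h t]
  by linarith

lemma power_shift_diff_odd_levels:
  fixes h z t :: real
  assumes k: "odd k" and h: "0 \<le> h" and z: "z \<le> h/2"
  shows "t \<le> z \<Longrightarrow> z^k - (z - h)^k \<le> t^k - (t - h)^k"
    and "z \<le> t \<Longrightarrow> t \<le> h - z \<Longrightarrow> t^k - (t - h)^k \<le> z^k - (z - h)^k"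
    and "h - z \<le> t \<Longrightarrow> z^k - (z - h)^k \<le> t^k - (t - h)^k"
proof -
  have reflect: "(h - z)^k - (h - z - h)^k = z^k - (z - h)^k"
    by (rule power_shift_diff_reflect_odd[OF k])
  show "t \<le> z \<Longrightarrow> z^k - (z - h)^k \<le> t^k - (t - h)^k"
    using z by (intro power_shift_diff_antimono_odd k h)
  show "t^k - (t - h)^k \<le> z^k - (z - h)^k" if "z \<le> t" "t \<le> h - z"
  proof (cases "t \<le> h/2")
    case True
    then show ?thesis
      using that by (intro power_shift_diff_antimono_odd k h)
  next
    case False
    then have "t^k - (t - h)^k \<le> (h - z)^k - (h - z - h)^k"
      using that by (intro power_shift_diff_mono_odd k h) auto
    then show ?thesis
      unfolding reflect .
  qed
  show "h - z \<le> t \<Longrightarrow> z^k - (z - h)^k \<le> t^k - (t - h)^k"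
    using power_shift_diff_mono_odd[OF k h, of "h - z" t] z unfolding reflect by simp
qed

lemma has_real_derivative_taylor_objective:
  fixes a c h :: real
  shows "((\<lambda>y. a*y + c*(y^(k+1) - (y - h)^(k+1))) has_real_derivative a + c * real (k+1) * (t^k - (t - h)^k)) (at t)"
  by (rule DERIV_cong[OF DERIV_add[OF DERIV_cmult[OF DERIV_ident]
        DERIV_cmult[OF has_real_derivative_power_shift_diff[of "k+1" h t]]]])
    (simp add: algebra_simps)

lemma taylor_objective_le_max_even:
  fixes a c h L R y :: real
  assumes "even k" "0 \<le> c" "0 \<le> h" "L \<le> y" "y \<le> R"
  shows "a*y + c*(y^(k+1) - (y - h)^(k+1)) \<le>
    max (a*L + c*(L^(k+1) - (L - h)^(k+1))) (a*R + c*(R^(k+1) - (R - h)^(k+1)))"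
proof (rule DERIV_mono_imp_le_max[OF has_real_derivative_taylor_objective])
  show "a + c * real (k+1) * (s^k - (s - h)^k) \<le> a + c * real (k+1) * (t^k - (t - h)^k)" if "s \<le> t" for s t
    using assms that by (simp add: mult_left_mono power_shift_diff_mono_even)
qed (use assms in auto)

lemma taylor_objective_le_critical_odd:
  fixes a c h z R y :: real
  assumes k: "odd k" and c: "0 \<le> c" and h: "0 \<le> h" and z: "z \<le> h/2"
    and critical: "a + c * real (k+1) * (z^k - (z - h)^k) = 0"
    and right_end: "a*R + c*(R^(k+1) - (R - h)^(k+1)) \<le> a*z + c*(z^(k+1) - (z - h)^(k+1))"
    and y: "y \<le> R"
  shows "a*y + c*(y^(k+1) - (y - h)^(k+1)) \<le> a*z + c*(z^(k+1) - (z - h)^(k+1))"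
proof -
  define P where "P t = t^k - (t - h)^k" for t
  define obj where "obj y = a*y + c*(y^(k+1) - (y - h)^(k+1))" for y
  have deriv: "(obj has_real_derivative a + c * real (k+1) * P t) (at t)" for t
    unfolding obj_def P_def by (rule has_real_derivative_taylor_objective)
  have slope: "a + c * real (k+1) * P t = c * real (k+1) * (P t - P z)" for t
    using critical unfolding P_def by (simp add: algebra_simps)
  have up: "0 \<le> a + c * real (k+1) * P t" if "P z \<le> P t" for t
    using c that unfolding slope by simp
  have down: "a + c * real (k+1) * P t \<le> 0" if "P t \<le> P z" for t
    using c that unfolding slope by (simp add: mult_nonneg_nonpos)
  note levels = power_shift_diff_odd_levels[OF k h z, folded P_def]
  have "obj y \<le> obj z"
  proof (cases "y \<le> h - z")
    case True
    show ?thesis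
      by (rule DERIV_sign_change_imp_le[OF deriv, where a = y and b = "h - z"])
        (use True levels up down in auto)
  next
    case False
    have "obj y \<le> obj R"
      by (rule deriv_nonneg_imp_mono[OF deriv]) (use False y levels(3) up in auto)
    also have "obj R \<le> obj z"
      using right_end unfolding obj_def .
    finally show ?thesis .
  qed
  then show ?thesis
    unfolding obj_def .
qed

lemma moreau_F_convex_has_real_derivative_kink:
  fixes lam mub rho D z x0 :: real
  assumes lam: "lam > 0" and rho: "rho \<ge> 0" and z: "-D/2 \<le> z" "z \<le> D/2"
    and prox: "mub*z = 2*lam*x0"
  shows "(moreau lam (maxY {-D/2..D/2} (F k 1 lam mub rho)) has_real_derivative 2*lam*x0) (at x0)"
proof -
  define c where "c = rho / fact (k+1)"
  have c: "0 \<le> c"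
    unfolding c_def using rho by simp
  have "(moreau lam (maxY {-D/2..D/2} (\<lambda>x y. -lam*x^2/2 + mub*x*y + c*\<bar>y\<bar>^(k+1)))
      has_real_derivative 2*lam*(x0 - 0)) (at x0)"
  proof (rule moreau_maxY_has_real_derivative[where ya = "-D/2" and yb = "D/2" and z = z])
    show "mub*0*y + c*\<bar>y\<bar>^(k+1) \<le> mub*0*(-D/2) + c*\<bar>-D/2\<bar>^(k+1)" if "y \<in> {-D/2..D/2}" for y
    proof -
      have "c*\<bar>y\<bar>^(k+1) \<le> c*\<bar>-D/2\<bar>^(k+1)"
        using that c by (intro mult_left_mono power_mono) auto
      then show ?thesis
        by simp
    qed
    show "continuous_on {-D/2..D/2} (\<lambda>y. c*\<bar>y\<bar>^(k+1))"
      by (intro continuous_intros)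
  qed (use lam z prox in auto)
  moreover have "F k 1 lam mub rho = (\<lambda>x y. -lam*x^2/2 + mub*x*y + c*\<bar>y\<bar>^(k+1))"
    unfolding F_def c_def by (simp add: fun_eq_iff)
  ultimately show ?thesis
    by simp
qed

lemma moreau_F_convex_has_real_derivative_left:
  fixes lam mub rho D x0 :: real
  assumes lam: "lam > 0" and mub: "mub \<ge> 0" and rho: "rho \<ge> 0" and D: "D \<ge> 0"
    and left: "4*lam*x0 + mub*D \<le> 0"
  shows "(moreau lam (maxY {-D/2..D/2} (F k 1 lam mub rho)) has_real_derivative -(2*lam*x0 + mub*D))
           (at x0)"
proof -
  define c u0 where "c = rho / fact (k+1)" and "u0 = 2*x0 + mub*D/(2*lam)"
  have "u0 = (4*lam*x0 + mub*D)/(2*lam)"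
    unfolding u0_def using lam by (simp add: field_simps)
  then have u0: "mub*u0 \<le> 0"
    using lam mub left by (simp add: mult_nonneg_nonpos divide_nonpos_pos)
  have "(moreau lam (maxY {-D/2..D/2} (\<lambda>x y. -lam*x^2/2 + mub*x*y + c*\<bar>y\<bar>^(k+1)))
      has_real_derivative 2*lam*(x0 - u0)) (at x0)"
  proof (rule moreau_maxY_has_real_derivative[where ya = "-D/2" and yb = "-D/2" and z = "-D/2"])
    show "mub*u0*y + c*\<bar>y\<bar>^(k+1) \<le> mub*u0*(-D/2) + c*\<bar>-D/2\<bar>^(k+1)" if "y \<in> {-D/2..D/2}" for y
    proof -
      have "c*\<bar>y\<bar>^(k+1) \<le> c*\<bar>-D/2\<bar>^(k+1)"
        using that rho unfolding c_def by (intro mult_left_mono power_mono) auto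
      moreover have "mub*u0*y \<le> mub*u0*(-D/2)"
        using that u0 by (intro mult_left_mono_neg) auto
      ultimately show ?thesis
        by linarith
    qed
    show "mub*(-D/2) = lam*(2*x0 - u0)"
      unfolding u0_def using lam by (simp add: field_simps)
    show "continuous_on {-D/2..D/2} (\<lambda>y. c*\<bar>y\<bar>^(k+1))"
      by (intro continuous_intros)
  qed (use lam D in auto)
  moreover have "F k 1 lam mub rho = (\<lambda>x y. -lam*x^2/2 + mub*x*y + c*\<bar>y\<bar>^(k+1))"
    unfolding F_def c_def by (simp add: fun_eq_iff)
  moreover have "2*lam*(x0 - u0) = -(2*lam*x0 + mub*D)"
    unfolding u0_def using lam by (simp add: field_simps)
  ultimately show ?thesis
    by simp
qed

lemma moreau_taylor_F_convex_even_has_real_derivative: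
  fixes lam mub rho D z x0 :: real
  assumes lam: "lam > 0" and rho: "rho \<ge> 0" and D: "D > 0" and k: "even k" "k \<ge> 2"
    and slope: "mub*x0 = rho / fact (k+1) * D^k * (1 - 1/2^k)"
    and z: "-D/2 \<le> z" "z \<le> D/2" and prox: "mub*z = lam*x0"
  shows "(moreau lam (maxY {-D/2..D/2} (taylor_y k (F k 1 lam mub rho) (D/2))) has_real_derivative 0)
           (at x0)"
proof -
  define c where "c = rho / fact (k+1)"
  have "-D/2 = -(D/2)" "-(D/2) - D/2 = -D" "(D/2)^(k+1) = D*D^k/(2*2^k)"
    by (simp_all add: power_divide)
  then have tie: "mub*x0*(-D/2) + c*((-D/2)^(k+1) - (-D/2 - D/2)^(k+1)) =
      mub*x0*(D/2) + c*((D/2)^(k+1) - (D/2 - D/2)^(k+1))"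
    using k(1) unfolding slope c_def[symmetric] by (simp add: field_simps)
  have "(moreau lam (maxY {-D/2..D/2} (\<lambda>x y. -lam*x^2/2 + mub*x*y + c*(y^(k+1) - (y - D/2)^(k+1))))
      has_real_derivative 2*lam*(x0 - x0)) (at x0)"
  proof (rule moreau_maxY_has_real_derivative[where ya = "-D/2" and yb = "D/2" and z = z])
    show "mub*x0*y + c*(y^(k+1) - (y - D/2)^(k+1)) \<le>
        mub*x0*(-D/2) + c*((-D/2)^(k+1) - (-D/2 - D/2)^(k+1))" if "y \<in> {-D/2..D/2}" for y
      using taylor_objective_le_max_even[of k c "D/2" "-D/2" y "D/2" "mub*x0"] k rho D that tie
      unfolding c_def by simp
    show "continuous_on {-D/2..D/2} (\<lambda>y. c*(y^(k+1) - (y - D/2)^(k+1)))"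
      by (intro continuous_intros)
  qed (use lam D z tie prox in auto)
  moreover have "taylor_y k (F k 1 lam mub rho) (D/2) =
      (\<lambda>x y. -lam*x^2/2 + mub*x*y + c*(y^(k+1) - (y - D/2)^(k+1)))"
    using taylor_y_F_eq[of "D/2" k 1 lam mub rho] D k unfolding c_def by simp
  ultimately show ?thesis
    by simp
qed

lemma one_minus_inverse_two_power_bounds:
  assumes k: "k \<ge> 2"
  shows "4 * (1 - 1/2^k) \<le> real (k+1)" "real (k+1) \<le> real k * (4 * (1 - 1/2^k))"
proof -
  have "(2::real)^2 \<le> 2^k"
    using k by (intro power_increasing) auto
  then have q: "3 \<le> 4 * (1 - 1/2^k :: real)"
    by (simp add: field_simps)
  show "4 * (1 - 1/2^k) \<le> real (k+1)"
  proof (cases "k = 2")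
    case False
    with k have "4 \<le> real (k+1)"
      by simp
    moreover have "0 \<le> 1/(2::real)^k"
      by simp
    ultimately show ?thesis
      unfolding right_diff_distrib by linarith
  qed simp
  have "real k * 3 \<le> real k * (4 * (1 - 1/2^k))"
    using q by (intro mult_left_mono) auto
  with k show "real (k+1) \<le> real k * (4 * (1 - 1/2^k))"
    by linarith
qed

lemma spurious_stationary_point_convex_even:
  fixes lam rho D :: real
  assumes lam: "lam > 0" and rho: "rho > 0" and D: "D > 0" and k: "even k" "k \<ge> 2"
  shows "spurious_stationary_point {-D/2..D/2} k 1 lam (critical_mu lam rho D k) rho
           (critical_mu lam rho D k * D / (2 * real k))"
proof -
  define mub q where "mub = critical_mu lam rho D k" and "q = (1 - 1/2^k :: real)"
  define z where "z = D*q/real (k+1)"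
  define x0 where "x0 = mub*z/lam"
  have mub: "mub > 0" "mub^2 = lam * (rho / fact k) * D^(k-1)"
    unfolding mub_def using critical_mu_squared[of lam rho D k] lam rho D
    by (simp_all add: critical_mu_def)
  have "D * (4*q) \<le> D * real (k+1)" "D * real (k+1) \<le> D * (real k * (4*q))"
    using one_minus_inverse_two_power_bounds[OF k(2)] D unfolding q_def
    by (intro mult_left_mono; simp)+
  moreover have "0 \<le> q"
    unfolding q_def by simp
  ultimately have z: "0 \<le> z" "4*z \<le> D" "D/(2*real k) \<le> 2*z"
    unfolding z_def using D k by (simp_all add: field_simps)
  have "mub*x0 = mub^2*z/lam"
    unfolding x0_def by (simp add: power2_eq_square)
  also have "\<dots> = rho / fact (k+1) * real (k+1) * (D*D^(k-1)) * q/real (k+1)"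
    unfolding mub(2) z_def divide_fact_Suc_mult using lam by simp
  also have "D*D^(k-1) = D^k"
    using k by (simp add: power_eq_if)
  finally have "mub*x0 = rho / fact (k+1) * D^k * q"
    by simp
  then have model: "(moreau lam (maxY {-D/2..D/2} (taylor_y k (F k 1 lam mub rho) (D/2)))
      has_real_derivative 0) (at x0)"
    using lam rho D k z unfolding q_def x0_def
    by (intro moreau_taylor_F_convex_even_has_real_derivative[where z = z]) auto
  have true: "(moreau lam (maxY {-D/2..D/2} (F k 1 lam mub rho)) has_real_derivative 2*lam*x0) (at x0)"
    using lam rho z unfolding x0_def by (intro moreau_F_convex_has_real_derivative_kink[where z = "2*z"]) auto
  have "mub * D / (2*real k) \<le> \<bar>2*lam*x0\<bar>"
    unfolding x0_def using lam mub(1) z mult_left_mono[of "D/(2*real k)" "2*z" mub] by simp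
  then show ?thesis
    using mub D by (intro spurious_stationary_pointI[OF _ _ _ model true]) (auto simp: mub_def)
qed

lemma moreau_taylor_F_convex_odd_has_real_derivative:
  fixes lam mub rho D h z x0 :: real
  assumes lam: "lam > 0" and rho: "rho \<ge> 0" and k: "odd k"
    and h: "0 \<le> h" and z: "z \<in> {-D/2..D/2}" "z \<le> h/2"
    and critical: "mub*x0 + rho / fact k * (z^k - (z - h)^k) = 0"
    and right_end: "mub*x0*(D/2) + rho / fact (k+1) * ((D/2)^(k+1) - (D/2 - h)^(k+1)) \<le>
                    mub*x0*z + rho / fact (k+1) * (z^(k+1) - (z - h)^(k+1))"
    and prox: "mub*z = lam*x0"
  shows "(moreau lam (maxY {-D/2..D/2} (taylor_y k (F k 1 lam mub rho) h)) has_real_derivative 0) (at x0)"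
proof -
  define c where "c = rho / fact (k+1)"
  have c: "0 \<le> c" "mub*x0 + c * real (k+1) * (z^k - (z - h)^k) = 0"
    unfolding c_def divide_fact_Suc_mult using rho critical by simp_all
  have "(moreau lam (maxY {-D/2..D/2} (\<lambda>x y. -lam*x^2/2 + mub*x*y + c*(y^(k+1) - (y - h)^(k+1))))
      has_real_derivative 2*lam*(x0 - x0)) (at x0)"
  proof (rule moreau_maxY_has_real_derivative[where ya = z and yb = z and z = z])
    show "mub*x0*y + c*(y^(k+1) - (y - h)^(k+1)) \<le> mub*x0*z + c*(z^(k+1) - (z - h)^(k+1))"
      if "y \<in> {-D/2..D/2}" for y
      using taylor_objective_le_critical_odd[OF k c(1) h z(2) c(2) right_end[folded c_def]] that
      by simp
    show "continuous_on {-D/2..D/2} (\<lambda>y. c*(y^(k+1) - (y - h)^(k+1)))"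
      by (intro continuous_intros)
  qed (use lam z prox in auto)
  moreover have "taylor_y k (F k 1 lam mub rho) h =
      (\<lambda>x y. -lam*x^2/2 + mub*x*y + c*(y^(k+1) - (y - h)^(k+1)))"
    using taylor_y_F_eq[of h k 1 lam mub rho] h odd_pos[OF k] unfolding c_def by simp
  ultimately show ?thesis
    by simp
qed

text \<open>The Taylor point is \<open>\<eta> D\<close>, the model's inner maximiser is \<open>-\<theta> D\<close> and the coupling is
  \<open>sqrt (S/\<theta>)\<close> times the critical one; the last conjunct says that, at scale \<open>D = 1\<close>, the
  model prefers \<open>-\<theta>\<close> to the right end point.\<close>
definition odd_case_parameters :: "nat \<Rightarrow> real \<Rightarrow> real \<Rightarrow> bool" where
  "odd_case_parameters k \<theta> \<eta> \<longleftrightarrow>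
    (let S = (\<theta> + \<eta>)^k - \<theta>^k in
      1/4 \<le> \<theta> \<and> \<theta> < 1/2 \<and> 0 < \<eta> \<and> \<eta> \<le> 1/2 \<and> S/\<theta> \<le> 1 \<and>
      1/(2*real k) \<le> sqrt (S/\<theta>) * (1 - 2*\<theta>) \<and>
      (1/2)^(k+1) - (1/2 - \<eta>)^(k+1) - real (k+1)*S*(1/2) \<le>
        (-\<theta>)^(k+1) - (-\<theta> - \<eta>)^(k+1) - real (k+1)*S*(-\<theta>))"

lemma taylor_objective_odd_scaled:
  fixes c D \<theta> \<eta> :: real and k :: nat
  defines "S \<equiv> (\<theta> + \<eta>)^k - \<theta>^k"
  defines "a \<equiv> -(c * real (k+1) * D^k * S)" and "z \<equiv> -(D*\<theta>)" and "h \<equiv> D*\<eta>"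
  assumes k: "odd k" and c: "0 \<le> c" and D: "0 < D"
    and ends: "(1/2)^(k+1) - (1/2 - \<eta>)^(k+1) - real (k+1)*S*(1/2) \<le>
        (-\<theta>)^(k+1) - (-\<theta> - \<eta>)^(k+1) - real (k+1)*S*(-\<theta>)"
  shows "a + c * real (k+1) * (z^k - (z - h)^k) = 0"
    and "a*(D/2) + c*((D/2)^(k+1) - (D/2 - h)^(k+1)) \<le> a*z + c*(z^(k+1) - (z - h)^(k+1))"
proof -
  have "z - h = -(D*(\<theta> + \<eta>))"
    unfolding z_def h_def by (simp add: algebra_simps)
  then have "z^k = -(D^k*\<theta>^k)" "(z - h)^k = -(D^k*(\<theta> + \<eta>)^k)"
    unfolding z_def using k by (simp_all add: power_mult_distrib)
  then show "a + c * real (k+1) * (z^k - (z - h)^k) = 0"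
    unfolding a_def S_def by (simp add: algebra_simps)
  have scale: "a*(D*t) + c*((D*t)^(k+1) - (D*t - h)^(k+1)) =
      c * D^(k+1) * (t^(k+1) - (t - \<eta>)^(k+1) - real (k+1)*S*t)" for t
  proof -
    have shift: "D*t - h = D*(t - \<eta>)"
      unfolding h_def by (simp add: algebra_simps)
    show ?thesis
      unfolding a_def shift power_mult_distrib by (simp add: algebra_simps)
  qed
  show "a*(D/2) + c*((D/2)^(k+1) - (D/2 - h)^(k+1)) \<le> a*z + c*(z^(k+1) - (z - h)^(k+1))"
    using scale[of "1/2"] scale[of "-\<theta>"] mult_left_mono[OF ends, of "c * D^(k+1)"] c D
    unfolding z_def by simp
qed

lemma spurious_stationary_point_convex_odd:
  fixes lam rho D \<theta> \<eta> :: real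
  assumes lam: "lam > 0" and rho: "rho > 0" and D: "D > 0" and k: "odd k"
    and params: "odd_case_parameters k \<theta> \<eta>"
  shows "spurious_stationary_point {-D/2..D/2} k 1 lam (critical_mu lam rho D k) rho
           (critical_mu lam rho D k * D / (2 * real k))"
proof -
  define S where "S = (\<theta> + \<eta>)^k - \<theta>^k"
  have \<theta>: "1/4 \<le> \<theta>" "\<theta> < 1/2" and \<eta>: "0 < \<eta>" "\<eta> \<le> 1/2" and S_le: "S/\<theta> \<le> 1"
    and gap: "1/(2*real k) \<le> sqrt (S/\<theta>) * (1 - 2*\<theta>)"
    and ends: "(1/2)^(k+1) - (1/2 - \<eta>)^(k+1) - real (k+1)*S*(1/2) \<le>
        (-\<theta>)^(k+1) - (-\<theta> - \<eta>)^(k+1) - real (k+1)*S*(-\<theta>)"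
    using params unfolding odd_case_parameters_def S_def Let_def by auto
  have S: "S > 0"
    unfolding S_def using \<theta> \<eta> odd_pos[OF k] by (simp add: power_strict_mono)
  define mc c where "mc = critical_mu lam rho D k" and "c = rho / fact (k+1)"
  have c: "0 \<le> c" "c * real (k+1) = rho / fact k"
    unfolding c_def divide_fact_Suc_mult using rho by simp_all
  define mub h z where "mub = mc * sqrt (S/\<theta>)" and "h = D*\<eta>" and "z = -(D*\<theta>)"
  define x0 where "x0 = mub*z/lam"
  have "0 < D*\<theta>" "D*\<theta> \<le> D*(1/2)" "0 < D*\<eta>" "D*\<eta> \<le> D*(1/2)"
    using D \<theta> \<eta> by (auto intro!: mult_left_mono)
  then have z: "z \<in> {-D/2..D/2}" "z \<le> h/2" and h: "h \<in> {-D/2..D/2}" "0 \<le> h"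
    unfolding z_def h_def by auto
  have mc: "mc > 0" "mc^2 = lam * (rho / fact k) * D^(k-1)"
    unfolding mc_def using critical_mu_squared[of lam rho D k] lam rho D
    by (simp_all add: critical_mu_def)
  have mub: "0 < mub" "mub \<le> mc"
    unfolding mub_def using mc S \<theta> S_le by (simp_all add: mult_left_le)
  have mub_squared: "mub^2 = mc^2 * (S/\<theta>)"
    unfolding mub_def using S \<theta> by (simp add: power_mult_distrib)
  have "mub*x0 = mub^2 * z / lam"
    unfolding x0_def by (simp add: power2_eq_square)
  also have "\<dots> = mc^2 * (S/\<theta>) * z / lam"
    unfolding mub_squared ..
  also have "\<dots> = -(c * real (k+1) * (D*D^(k-1)) * S)"
    unfolding mc(2) z_def c(2)[symmetric] using lam \<theta> by (simp add: field_simps)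
  finally have slope: "mub*x0 = -(c * real (k+1) * D^k * S)"
    using odd_pos[OF k] by (simp add: power_eq_if)
  have "mub*x0 + c * real (k+1) * (z^k - (z - h)^k) = 0"
    and "mub*x0*(D/2) + c*((D/2)^(k+1) - (D/2 - h)^(k+1)) \<le> mub*x0*z + c*(z^(k+1) - (z - h)^(k+1))"
    unfolding slope S_def z_def h_def by (rule taylor_objective_odd_scaled[OF k c(1) D ends[unfolded S_def]])+
  then have model: "(moreau lam (maxY {-D/2..D/2} (taylor_y k (F k 1 lam mub rho) h))
      has_real_derivative 0) (at x0)"
    using lam rho k h z unfolding c(2) unfolding c_def x0_def
    by (intro moreau_taylor_F_convex_odd_has_real_derivative[where z = z]) auto
  have "4*lam*x0 + mub*D = mub*D*(1 - 4*\<theta>)"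
    unfolding x0_def z_def using lam by (simp add: field_simps)
  also have "\<dots> \<le> 0"
    using mub D \<theta> by (intro mult_nonneg_nonpos) auto
  finally have true: "(moreau lam (maxY {-D/2..D/2} (F k 1 lam mub rho))
      has_real_derivative -(2*lam*x0 + mub*D)) (at x0)"
    using lam mub rho D by (intro moreau_F_convex_has_real_derivative_left) auto
  have "-(2*lam*x0 + mub*D) = -(mc * D * (sqrt (S/\<theta>) * (1 - 2*\<theta>)))"
    unfolding x0_def z_def mub_def using lam by (simp add: field_simps)
  moreover have "mc * D * (1/(2*real k)) \<le> mc * D * (sqrt (S/\<theta>) * (1 - 2*\<theta>))"
    using gap mc D by (intro mult_left_mono) auto
  ultimately show ?thesis
    using mub h unfolding mc_def[symmetric]
    by (intro spurious_stationary_pointI[OF _ _ _ model true]) auto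
qed

lemma odd_case_right_end_half_shift:
  fixes \<theta> :: real
  assumes \<theta>: "0 < \<theta>" "\<theta> \<le> 1/2" and k: "odd k" "k \<ge> 3"
  defines "S \<equiv> (\<theta> + 1/2)^k - \<theta>^k"
  shows "(1/2)^(k+1) - (1/2 - 1/2)^(k+1) - real (k+1)*S*(1/2) \<le>
    (-\<theta>)^(k+1) - (-\<theta> - 1/2)^(k+1) - real (k+1)*S*(-\<theta>)"
proof -
  define s where "s = \<theta> + 1/2"
  have s: "0 < s" "\<theta> \<le> s/2"
    unfolding s_def using \<theta> by auto
  have "(-\<theta>)^(k+1) = \<theta>*\<theta>^k" "(-\<theta> - 1/2)^(k+1) = s^(k+1)"
    using k(1) power_minus_even[of "k+1" "\<theta> + 1/2"] unfolding s_def by simp_all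
  then have gap: "(-\<theta>)^(k+1) - (-\<theta> - 1/2)^(k+1) - real (k+1)*S*(-\<theta>)
      - ((1/2)^(k+1) - (1/2 - 1/2)^(k+1) - real (k+1)*S*(1/2))
      = real k * s^(k+1) - real (k+1) * (s*\<theta>^k) + \<theta>*\<theta>^k - (1/2)^(k+1)"
    unfolding S_def s_def[symmetric] by (simp add: s_def algebra_simps)
  have "\<theta>^k \<le> (s/2)^k"
    using s \<theta> by (intro power_mono) auto
  also have "\<dots> = s^k/2^k"
    by (simp add: power_divide)
  also have "\<dots> \<le> s^k/8"
    using power_increasing[of 3 k "2::real"] k s by (intro divide_left_mono) auto
  finally have "real (k+1) * (s*\<theta>^k) \<le> real (k+1) * (s^(k+1)/8)"
    using s by (intro mult_left_mono) (auto simp: field_simps)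
  moreover have "(1/2)^(k+1) \<le> s^(k+1)"
    unfolding s_def using \<theta> by (intro power_mono) auto
  moreover have "real (k+1) * (s^(k+1)/8) + s^(k+1) \<le> real k * s^(k+1)"
    using k s by (simp add: field_simps)
  moreover have "0 \<le> \<theta>*\<theta>^k"
    using \<theta> by simp
  ultimately show ?thesis
    using gap by linarith
qed

lemma odd_case_parameters_3: "odd_case_parameters 3 (1/4) (1/4)"
proof -
  have "1/3 \<le> sqrt (7/16 :: real)"
    by (rule real_le_rsqrt) (simp add: power2_eq_square)
  then show ?thesis
    unfolding odd_case_parameters_def Let_def by (simp add: power_divide)
qed

lemma odd_case_parameters_5_7:
  assumes "k = 5 \<or> k = 7"
  shows "odd_case_parameters k (1/4) (1/2)"
proof -
  have "1/5 \<le> sqrt (121/128 :: real)" "1/7 \<le> sqrt (1093/2048 :: real)"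
    by (rule real_le_rsqrt, simp add: power2_eq_square)+
  moreover have "odd k" "k \<ge> 3"
    using assms by auto
  ultimately show ?thesis
    using odd_case_right_end_half_shift[of "1/4" k] assms unfolding odd_case_parameters_def Let_def
    by (auto simp: power_divide)
qed

lemma power_one_minus_two_div_bounds:
  assumes k: "k \<ge> 9"
  shows "1/27 \<le> (1 - 2/real k)^k" "(1 - 2/real k)^k \<le> 1/4"
proof -
  define b where "b = (1 + 2/(real k - 2))^k"
  have exponent: "(2*real k/(real k - 2))/real k = 2/(real k - 2)"
    using k by simp
  have "b \<le> exp (2*real k/(real k - 2))"
    unfolding b_def
    by (rule exp_ge_one_plus_x_over_n_power_n[of k "2*real k/(real k - 2)", unfolded exponent])
      (use k in \<open>auto simp: field_simps\<close>)
  also have "\<dots> \<le> exp 3"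
    using k by (simp add: field_simps)
  also have "\<dots> = exp 1 ^ 3"
    by (simp flip: exp_of_nat_mult)
  also have "\<dots> \<le> 3^3"
    using exp_le by (intro power_mono) auto
  finally have b_le: "b \<le> 27"
    by simp
  have b_pos: "0 < b"
    unfolding b_def using k by (intro zero_less_power add_pos_pos divide_pos_pos) auto
  have "(1 - 2/real k)^k * b = 1"
    unfolding b_def using k by (simp flip: power_mult_distrib add: field_simps)
  then have "(1 - 2/real k)^k = 1/b"
    using b_pos by (simp add: eq_divide_eq)
  also have "1/27 \<le> 1/b"
    using b_le b_pos by (intro divide_left_mono) auto
  finally show "1/27 \<le> (1 - 2/real k)^k" .
  have "(2::real)^2 \<le> exp 1 ^ 2"
    using exp_ge_add_one_self[of 1] by (intro power_mono) auto
  then have "4 \<le> exp (2::real)"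
    by (simp flip: exp_of_nat_mult)
  then have "exp (-2::real) \<le> 1/4"
    by (simp add: exp_minus inverse_eq_divide divide_left_mono)
  moreover have "(1 - 2/real k)^k \<le> exp (-2)"
    using k exp_ge_one_minus_x_over_n_power_n[of 2 k] by simp
  ultimately show "(1 - 2/real k)^k \<le> 1/4"
    by linarith
qed

lemma odd_case_parameters_ge_9:
  assumes k: "odd k" "k \<ge> 9"
  shows "odd_case_parameters k (1/2 - 2/real k) (1/2)"
proof -
  define \<theta> S where "\<theta> = 1/2 - 2/real k" and "S = (\<theta> + 1/2)^k - \<theta>^k"
  have \<tau>: "\<theta> + 1/2 = 1 - 2/real k"
    unfolding \<theta>_def by simp
  have \<theta>: "1/4 \<le> \<theta>" "\<theta> < 1/2" "1 - 2*\<theta> = 4/real k"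
    unfolding \<theta>_def using k by (simp_all add: field_simps)
  have "\<theta>^k \<le> (1/2)^k"
    using \<theta> by (intro power_mono) auto
  also have "\<dots> \<le> (1/2)^9"
    using k by (intro power_decreasing) auto
  finally have "\<theta>^k \<le> 1/512"
    by (simp add: power_divide)
  moreover have "0 \<le> \<theta>^k"
    using \<theta> by simp
  ultimately have S: "1/64 \<le> S" "S \<le> \<theta>"
    unfolding S_def \<tau> using power_one_minus_two_div_bounds[OF k(2)] \<theta> by linarith+
  have "S \<le> S/\<theta>"
    using S \<theta> by (simp add: le_divide_eq mult_le_cancel_left1)
  with S have "(1/8)^2 \<le> S/\<theta>"
    unfolding power2_eq_square by linarith
  then have "1/8 \<le> sqrt (S/\<theta>)"
    by (rule real_le_rsqrt)
  then have "1/(2*real k) \<le> sqrt (S/\<theta>) * (1 - 2*\<theta>)"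
    unfolding \<theta>(3) using k mult_right_mono[of "1/8" "sqrt (S/\<theta>)" "4/real k"] by simp
  moreover have "S/\<theta> \<le> 1"
    using S \<theta> by simp
  ultimately show ?thesis
    using odd_case_right_end_half_shift[of \<theta> k] \<theta> k
    unfolding odd_case_parameters_def Let_def S_def \<theta>_def[symmetric] by auto
qed

lemma odd_case_parameters_exist:
  assumes "odd k" "k \<ge> 3"
  obtains \<theta> \<eta> where "odd_case_parameters k \<theta> \<eta>"
proof -
  have "k = 3 \<or> (k = 5 \<or> k = 7) \<or> k \<ge> 9"
    using assms by presburger
  then show ?thesis
    using that odd_case_parameters_3 odd_case_parameters_5_7 odd_case_parameters_ge_9 assms
    by blast
qed

theorem proposition5:
  fixes lam mu rho D :: real and k :: nat
  assumes "lam > 0" "mu > 0" "rho > 0" "D > 0" "k \<ge> 2"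
  defines "mu_cr \<equiv> sqrt (lam * rho * D^(k-1) / fact k)"
  shows "(mu \<le> mu_cr \<longrightarrow>
           (\<exists>mub yh xs. 0 \<le> mub \<and> mub \<le> mu \<and> yh \<in> {0..D} \<and>
              (moreau lam (maxY {0..D} (taylor_y k (F k (-1) lam mub rho) yh))
                 has_real_derivative 0) (at xs) \<and>
              (\<exists>d. (moreau lam (maxY {0..D} (F k (-1) lam mub rho)) has_real_derivative d) (at xs)
                   \<and> \<bar>d\<bar> \<ge> mu * D / (2 * real k))))
       \<and> (mu \<ge> mu_cr \<longrightarrow>
           (\<exists>mub yh xs. 0 \<le> mub \<and> mub \<le> mu \<and> yh \<in> {-D/2..D/2} \<and>
              (moreau lam (maxY {-D/2..D/2} (taylor_y k (F k 1 lam mub rho) yh))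
                 has_real_derivative 0) (at xs) \<and>
              (\<exists>d. (moreau lam (maxY {-D/2..D/2} (F k 1 lam mub rho)) has_real_derivative d) (at xs)
                   \<and> \<bar>d\<bar> \<ge> mu_cr * D / (2 * real k))))"
proof -
  have mu_cr: "mu_cr = critical_mu lam rho D k"
    unfolding mu_cr_def critical_mu_def ..
  have concave: "spurious_stationary_point {0..D} k (-1) lam mu rho (mu * D / (2 * real k))"
    if "mu \<le> mu_cr"
    using spurious_stationary_point_concave assms(1-5) that unfolding mu_cr by simp
  have "spurious_stationary_point {-D/2..D/2} k 1 lam mu_cr rho (mu_cr * D / (2 * real k))"
  proof (cases "even k")
    case True
    then show ?thesis
      using spurious_stationary_point_convex_even assms(1,3-5) unfolding mu_cr by simp
  next
    case False
    moreover have "k \<ge> 3"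
      using False assms(5) by presburger
    ultimately obtain \<theta> \<eta> where "odd_case_parameters k \<theta> \<eta>"
      by (rule odd_case_parameters_exist)
    then show ?thesis
      using spurious_stationary_point_convex_odd False assms(1,3,4) unfolding mu_cr by simp
  qed
  then have convex: "spurious_stationary_point {-D/2..D/2} k 1 lam mu rho (mu_cr * D / (2 * real k))"
    if "mu_cr \<le> mu"
    using that by (rule spurious_stationary_point_mono)
  show ?thesis
    using concave convex unfolding spurious_stationary_point_def by blast
qed

end
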